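(* Let $X$ be a Minkowski space whose closed unit ball $B$ is a polytope, and let $f$ be the largest number of facets (faces of codimension one within the face itself) that a proper face of $B$ can have. Then $m(X)\geq f$.
   Context: A Minkowski space is a finite-dimensional real normed space $(X,\|\cdot\|)$. For a set $S\subseteq X$, its midpoint set is $M(S)=\{\tfrac12(x+y): x,y\in S,\ x\neq y\}$. A set $S\subseteq X$ is an M-set if every vector in $M(S)$ has norm exactly $1$ and every vector in $S$ has norm strictly greater than $1$. $m(X)$ denotes the largest cardinality of an M-set in $X$ if such a largest finite cardinality exists, and $m(X)=\infty$ otherwise. *)

theory Defs
  imports "HOL-Analysis.Analysis" "HOL-Library.Extended_Nat"
begin

text \<open>A Minkowski space is modelled as a finite-dimensional real vector space
  (a type of class euclidean_space, used only for its linear structure) equipped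
  with an arbitrary norm N.\<close>

definition is_norm :: "('a::euclidean_space \<Rightarrow> real) \<Rightarrow> bool" where
  "is_norm N \<longleftrightarrow>
     (\<forall>x. N x = 0 \<longleftrightarrow> x = 0) \<and>
     (\<forall>x y. N (x + y) \<le> N x + N y) \<and>
     (\<forall>c x. N (c *\<^sub>R x) = \<bar>c\<bar> * N x)"

definition unit_ball :: "('a::euclidean_space \<Rightarrow> real) \<Rightarrow> 'a set" where
  "unit_ball N = {x. N x \<le> 1}"

definition midpoint_set :: "'a::real_vector set \<Rightarrow> 'a set" where
  "midpoint_set S = {(1/2) *\<^sub>R (x + y) | x y. x \<in> S \<and> y \<in> S \<and> x \<noteq> y}"

definition is_Mset :: "('a::euclidean_space \<Rightarrow> real) \<Rightarrow> 'a set \<Rightarrow> bool" where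
  "is_Mset N S \<longleftrightarrow> (\<forall>v \<in> midpoint_set S. N v = 1) \<and> (\<forall>x \<in> S. N x > 1)"

definition m_number :: "('a::euclidean_space \<Rightarrow> real) \<Rightarrow> enat" where
  "m_number N =
     (if \<exists>S. is_Mset N S \<and> infinite S then \<infinity>
      else Sup {enat (card S) | S. is_Mset N S})"

definition max_facets_proper_face :: "('a::euclidean_space \<Rightarrow> real) \<Rightarrow> nat" where
  "max_facets_proper_face N =
     Max {card {G. G facet_of F} | F. F face_of unit_ball N \<and> F \<noteq> unit_ball N}"

end

theory Submission
  imports Defs
begin

text \<open>
  Let F be a proper face of the unit ball B with the maximal number k of
  facets.  Choose in the relative interior of each facet G of F a point p G, and a
  point c in the relative interior of F.  The midpoint of p G and p H for distinct
  facets G, H lies in no facet of F, hence in the relative interior of F.  Pushing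
  every p G slightly away from c, i.e. replacing it by (1 + e) p G - e c for a small
  e > 0, moves the k points out of F but keeps all their pairwise midpoints inside F.  Afterwards
  we use that a nonempty proper face of the (symmetric) unit ball lies in a supporting
  hyperplane a \<bullet> x = b with b > 0: then F consists of vectors of norm 1, while
  points of that hyperplane outside F have norm greater than 1.  So the pushed points
  form an M-set with k elements, which gives m(X) \<ge> k.
\<close>

section \<open>Stretching points away from a centre\<close>

definition stretch :: "real \<Rightarrow> 'a::real_vector \<Rightarrow> 'a \<Rightarrow> 'a" where
  "stretch e c p = (1 + e) *\<^sub>R p - e *\<^sub>R c"

lemma midpoint_stretch:
  "(1/2) *\<^sub>R (stretch e c p + stretch e c q) = stretch e c (midpoint p q)"
proof -
  have "(e / 2) *\<^sub>R c + (e / 2) *\<^sub>R c = e *\<^sub>R c" by (simp flip: scaleR_add_left)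
  then show ?thesis
    unfolding stretch_def midpoint_def scaleR_diff_right scaleR_add_right scaleR_scaleR
    by (simp add: algebra_simps)
qed

lemma inj_stretch:
  assumes "e > 0"
  shows "inj (stretch e c)"
  using assms by (intro injI) (simp add: stretch_def)

lemma stretch_in_affine_hull:
  assumes "p \<in> affine hull F" "c \<in> affine hull F"
  shows "stretch e c p \<in> affine hull F"
proof -
  have "(1 + e) *\<^sub>R p + (- e) *\<^sub>R c \<in> affine hull F"
    using assms by (intro mem_affine[OF affine_affine_hull]) auto
  then show ?thesis unfolding stretch_def by (simp add: algebra_simps)
qed

lemma eventually_stretch_in:
  fixes F :: "'a::euclidean_space set"
  assumes "convex F" "c \<in> affine hull F" "m \<in> rel_interior F"
  shows "eventually (\<lambda>e. stretch e c m \<in> F) (at_right 0)"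
proof -
  obtain t where t: "t > 1" "\<And>e. e > 1 \<and> e \<le> t \<Longrightarrow> (1 - e) *\<^sub>R c + e *\<^sub>R m \<in> F"
    using bspec[OF convex_rel_interior_if[OF assms(1,3)] assms(2)] by blast
  show ?thesis unfolding eventually_at_right_field
  proof (intro exI[of _ "t - 1"] conjI allI impI)
    show "0 < t - 1" using t by simp
    fix e :: real assume "0 < e" "e < t - 1"
    then have "(1 - (1 + e)) *\<^sub>R c + (1 + e) *\<^sub>R m \<in> F" using t(2)[of "1 + e"] by simp
    then show "stretch e c m \<in> F" unfolding stretch_def by (simp add: algebra_simps)
  qed
qed

lemma uniform_stretch_in:
  fixes F :: "'a::euclidean_space set"
  assumes "convex F" "c \<in> affine hull F" "finite P" "P \<subseteq> rel_interior F"
  obtains e where "e > 0" "\<And>m. m \<in> P \<Longrightarrow> stretch e c m \<in> F"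
proof -
  have "eventually (\<lambda>e. \<forall>m\<in>P. stretch e c m \<in> F) (at_right 0)"
    using assms eventually_stretch_in[OF assms(1,2)] by (intro eventually_ball_finite) auto
  then obtain b :: real where "b > 0" "\<And>e. 0 < e \<Longrightarrow> e < b \<Longrightarrow> \<forall>m\<in>P. stretch e c m \<in> F"
    unfolding eventually_at_right_field by auto
  then show ?thesis using that[of "b / 2"] by auto
qed

text \<open>Conversely, stretching a point outside the relative interior about a
  relative-interior centre leaves F: otherwise the point would lie on an open segment
  from the centre to a point of F, hence in the relative interior.\<close>
lemma stretch_not_in:
  fixes F :: "'a::euclidean_space set"
  assumes "convex F" "c \<in> rel_interior F" "p \<notin> rel_interior F" "e > 0"
  shows "stretch e c p \<notin> F"
proof
  assume in_F: "stretch e c p \<in> F"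
  have "c \<noteq> stretch e c p"
  proof
    assume "c = stretch e c p"
    then have "(1 + e) *\<^sub>R p = (1 + e) *\<^sub>R c" unfolding stretch_def by (simp add: algebra_simps)
    then show False using assms(2,3,4) by simp
  qed
  moreover have "p = (1 - 1/(1+e)) *\<^sub>R c + (1/(1+e)) *\<^sub>R stretch e c p"
  proof -
    have "(1/(1+e)) *\<^sub>R p + (e/(1+e)) *\<^sub>R p = ((1 + e)/(1+e)) *\<^sub>R p"
      by (simp only: scaleR_add_left[symmetric] add_divide_distrib)
    then have "(1/(1+e)) *\<^sub>R p + (e/(1+e)) *\<^sub>R p = p" using assms(4) by simp
    then show ?thesis using assms(4) unfolding stretch_def by (simp add: algebra_simps divide_simps)
  qed
  ultimately have "p \<in> open_segment c (stretch e c p)"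
    using assms(4) unfolding in_segment by (intro conjI exI[of _ "1/(1+e)"]) auto
  then have "p \<in> rel_interior F"
    using rel_interior_closure_convex_segment[OF assms(1,2)] in_F closure_subset by blast
  then show False using assms(3) by simp
qed

section \<open>Facets of a polytope\<close>

text \<open>A proper face containing a relative-interior point of a facet is that facet,
  since faces strictly between a facet and F would violate the dimension count.\<close>
lemma facet_eq_face_through_rel_interior:
  fixes F :: "'a::euclidean_space set"
  assumes "convex F" "G facet_of F" "H face_of F" "H \<noteq> F" "x \<in> rel_interior G" "x \<in> H"
  shows "G = H"
proof (rule ccontr)
  assume ne: "G \<noteq> H"
  have "G \<subseteq> H"
    using subset_of_face_of[OF assms(3) facet_of_imp_subset[OF assms(2)]] assms(5,6) by blast
  then have "G face_of H"
    using face_of_subset[OF facet_of_imp_face_of[OF assms(2)]] face_of_imp_subset[OF assms(3)]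
    by blast
  then have "aff_dim G < aff_dim H"
    using face_of_aff_dim_lt[OF face_of_imp_convex[OF assms(3)]] ne by blast
  moreover have "aff_dim H < aff_dim F" using face_of_aff_dim_lt[OF assms(1,3,4)] .
  moreover have "aff_dim G = aff_dim F - 1" using assms(2) facet_of_def by blast
  ultimately show False by linarith
qed

text \<open>The midpoint of relative-interior points of two distinct facets lies in no facet,
  hence (the relative boundary of a polytope being the union of its facets) in the
  relative interior.\<close>
lemma midpoint_facets_rel_interior:
  fixes F :: "'a::euclidean_space set"
  assumes "polytope F" "G facet_of F" "H facet_of F" "G \<noteq> H"
    and p: "p \<in> rel_interior G" and q: "q \<in> rel_interior H"
  shows "midpoint p q \<in> rel_interior F"
proof (rule ccontr)
  assume nin: "midpoint p q \<notin> rel_interior F"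
  have cF: "convex F" using assms(1) polytope_imp_convex by blast
  have pq: "p \<in> F" "q \<in> F"
    using p q assms(2,3) rel_interior_subset facet_of_imp_subset by blast+
  have "H \<noteq> F" using assms(3) by (auto simp: facet_of_def)
  then have "p \<noteq> q"
    using facet_eq_face_through_rel_interior[OF cF assms(2) facet_of_imp_face_of[OF assms(3)] _ p]
      assms(4) rel_interior_subset q by blast
  have "midpoint p q \<in> F"
    using convexD_alt[OF cF pq, of "1/2"] by (simp add: midpoint_def algebra_simps)
  then have "midpoint p q \<in> rel_frontier F"
    using nin closure_closed[OF polytope_imp_closed[OF assms(1)]] by (simp add: rel_frontier_def)
  then obtain K where K: "K facet_of F" "midpoint p q \<in> K"
    using rel_frontier_of_polyhedron[OF polytope_imp_polyhedron[OF assms(1)]] by blast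
  have Kf: "K face_of F" "K \<noteq> F" using K facet_of_imp_face_of by (auto simp: facet_of_def)
  have "p \<in> K" "q \<in> K"
    using Kf(1) K(2) \<open>p \<noteq> q\<close> pq unfolding face_of_def by (meson midpoint_in_open_segment)+
  then have "G = K" "H = K"
    using facet_eq_face_through_rel_interior[OF cF _ Kf] assms(2,3) p q by blast+
  then show False using assms(4) by simp
qed

lemma facet_centres:
  fixes F :: "'a::euclidean_space set"
  assumes "polytope F"
  obtains p where "inj_on p {G. G facet_of F}"
    "\<And>G. G facet_of F \<Longrightarrow> p G \<in> F - rel_interior F"
    "\<And>G H. G facet_of F \<Longrightarrow> H facet_of F \<Longrightarrow> G \<noteq> H \<Longrightarrow> midpoint (p G) (p H) \<in> rel_interior F"
proof -
  have cF: "convex F" using assms polytope_imp_convex by blast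
  have facet: "G face_of F" "G \<noteq> F" "G \<noteq> {}" if "G facet_of F" for G
    using that unfolding facet_of_def by auto
  have "\<exists>x. x \<in> rel_interior G" if "G facet_of F" for G
    using facet[OF that] face_of_imp_convex rel_interior_eq_empty by blast
  then obtain p where p: "\<And>G. G facet_of F \<Longrightarrow> p G \<in> rel_interior G" by metis
  have pG: "p G \<in> G" if "G facet_of F" for G using p[OF that] rel_interior_subset by blast
  show ?thesis
  proof (rule that[of p])
    show "inj_on p {G. G facet_of F}"
    proof (rule inj_onI)
      fix G H assume GH: "G \<in> {G. G facet_of F}" "H \<in> {G. G facet_of F}" "p G = p H"
      show "G = H"
        using facet_eq_face_through_rel_interior[OF cF _ facet(1,2) p] GH pG by simp
    qed
    show "p G \<in> F - rel_interior F" if "G facet_of F" for G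
      using pG[OF that] face_of_imp_subset[OF facet(1)[OF that]]
        face_of_disjoint_rel_interior[OF facet(1,2)[OF that]] by blast
    show "midpoint (p G) (p H) \<in> rel_interior F"
      if "G facet_of F" "H facet_of F" "G \<noteq> H" for G H
      using midpoint_facets_rel_interior[OF assms that p[OF that(1)] p[OF that(2)]] .
  qed
qed

text \<open>The affine core of the argument: a polytope with k facets admits k points in its
  affine hull, outside the polytope, whose pairwise midpoints all lie in the polytope.
  They are the facet centres, stretched slightly away from a relative-interior point.\<close>
lemma polytope_facet_points:
  fixes F :: "'a::euclidean_space set"
  assumes "polytope F"
  obtains S where "card S = card {G. G facet_of F}"
    "S \<subseteq> affine hull F - F" "midpoint_set S \<subseteq> F"
proof (cases "F = {}")
  case True
  then show ?thesis using that[of "{}"] by (auto simp: midpoint_set_def)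
next
  case False
  define Fs where "Fs = {G. G facet_of F}"
  have cF: "convex F" using assms polytope_imp_convex by blast
  have finFs: "finite Fs"
    using finite_polytope_faces[OF assms] unfolding Fs_def
    by (rule finite_subset[rotated]) (auto simp: facet_of_def)
  obtain c where c: "c \<in> rel_interior F" using False rel_interior_eq_empty[OF cF] by blast
  have c_hull: "c \<in> affine hull F" using c rel_interior_subset by (blast intro: hull_inc)
  obtain p where inj_p: "inj_on p Fs"
    and pF: "\<And>G. G facet_of F \<Longrightarrow> p G \<in> F - rel_interior F"
    and mid: "\<And>G H. G facet_of F \<Longrightarrow> H facet_of F \<Longrightarrow> G \<noteq> H \<Longrightarrow>
      midpoint (p G) (p H) \<in> rel_interior F"
    using facet_centres[OF assms] unfolding Fs_def by metis
  define P where "P = {midpoint (p G) (p H) | G H. G facet_of F \<and> H facet_of F \<and> G \<noteq> H}"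
  have "P \<subseteq> (\<lambda>(G, H). midpoint (p G) (p H)) ` (Fs \<times> Fs)" unfolding P_def Fs_def by auto
  then have "finite P" by (rule finite_subset) (use finFs in simp)
  moreover have "P \<subseteq> rel_interior F" unfolding P_def using mid by blast
  ultimately obtain e where e: "e > 0" "\<And>m. m \<in> P \<Longrightarrow> stretch e c m \<in> F"
    using uniform_stretch_in[OF cF c_hull] by blast
  define S where "S = stretch e c ` p ` Fs"
  show ?thesis
  proof (rule that[of S])
    have "inj_on (stretch e c \<circ> p) Fs"
      by (intro comp_inj_on inj_p inj_on_subset[OF inj_stretch[OF e(1)]]) simp
    then show "card S = card {G. G facet_of F}"
      unfolding S_def Fs_def[symmetric] image_comp by (rule card_image)
    have "stretch e c (p G) \<in> affine hull F - F" if "G facet_of F" for G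
    proof -
      have "p G \<in> F" "p G \<notin> rel_interior F" using pF[OF that] by auto
      then show ?thesis
        using stretch_in_affine_hull[OF hull_inc c_hull] stretch_not_in[OF cF c _ e(1)] by blast
    qed
    then show "S \<subseteq> affine hull F - F" unfolding S_def Fs_def by blast
    show "midpoint_set S \<subseteq> F"
    proof
      fix v assume "v \<in> midpoint_set S"
      then obtain G H where GH: "G facet_of F" "H facet_of F"
          "stretch e c (p G) \<noteq> stretch e c (p H)"
          "v = (1/2) *\<^sub>R (stretch e c (p G) + stretch e c (p H))"
        unfolding midpoint_set_def S_def Fs_def by blast
      then have "midpoint (p G) (p H) \<in> P" unfolding P_def by auto
      then show "v \<in> F" using e(2) GH(4) by (simp add: midpoint_stretch)
    qed
  qed
qed

section \<open>Norms and their unit balls\<close>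

lemma is_norm_basic:
  fixes N :: "'a::euclidean_space \<Rightarrow> real"
  assumes "is_norm N"
  shows "N 0 = 0" "N (- x) = N x" "N x \<ge> 0" "N (c *\<^sub>R x) = \<bar>c\<bar> * N x"
    "N x = 0 \<longleftrightarrow> x = 0"
proof -
  show hom: "N (c *\<^sub>R x) = \<bar>c\<bar> * N x" "N x = 0 \<longleftrightarrow> x = 0" for c x
    using assms unfolding is_norm_def by blast+
  show "N 0 = 0" using hom(2) by simp
  show neg: "N (- x) = N x" for x using hom(1)[of "-1" x] by simp
  have "N (x + - x) \<le> N x + N (- x)" using assms unfolding is_norm_def by blast
  then show "N x \<ge> 0" using neg[of x] hom(2)[of 0] by simp
qed

text \<open>A nonempty proper face of a polytopal unit ball is cut out by a supporting
  hyperplane which, by central symmetry of the ball, does not pass through the origin.\<close>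
lemma unit_ball_proper_face_hyperplane:
  fixes N :: "'a::euclidean_space \<Rightarrow> real"
  assumes "is_norm N" "polytope (unit_ball N)"
    and F: "F face_of unit_ball N" "F \<noteq> unit_ball N" "F \<noteq> {}"
  obtains a b where "b > 0" "unit_ball N \<subseteq> {x. a \<bullet> x \<le> b}" "F = unit_ball N \<inter> {x. a \<bullet> x = b}"
proof -
  let ?B = "unit_ball N"
  have "F exposed_face_of ?B"
    using exposed_face_of_polyhedron[OF polytope_imp_polyhedron[OF assms(2)]] F(1) by blast
  then obtain a b where ab: "?B \<subseteq> {x. a \<bullet> x \<le> b}" "F = ?B \<inter> {x. a \<bullet> x = b}"
    unfolding exposed_face_of_def using F(3) by blast
  have "0 \<in> ?B" by (simp add: unit_ball_def is_norm_basic(1)[OF assms(1)])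
  then have "b \<ge> 0" using ab(1) by auto
  moreover have "b \<noteq> 0"
  proof
    assume b0: "b = 0"
    have "x \<in> F" if "x \<in> ?B" for x
    proof -
      have "-x \<in> ?B" using that is_norm_basic[OF assms(1)] by (simp add: unit_ball_def)
      then have "a \<bullet> x \<le> 0" "a \<bullet> (-x) \<le> 0" using ab(1) that b0 by auto
      then show ?thesis using ab(2) that b0 by simp
    qed
    then show False using F(1,2) face_of_imp_subset by blast
  qed
  ultimately show ?thesis using that[where a = a and b = b] ab by simp
qed

text \<open>Hence the points of a proper face of the unit ball are unit vectors, and the
  points of its affine hull outside the face have norm greater than 1.  Consequently
  the point sets produced by polytope_facet_points are M-sets.\<close>
lemma Mset_from_proper_face:
  fixes N :: "'a::euclidean_space \<Rightarrow> real"
  assumes N: "is_norm N" "polytope (unit_ball N)"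
    and F: "F face_of unit_ball N" "F \<noteq> unit_ball N"
    and S: "S \<subseteq> affine hull F - F" "midpoint_set S \<subseteq> F"
  shows "is_Mset N S"
proof (cases "F = {}")
  case True
  then show ?thesis using S(1) by (simp add: is_Mset_def midpoint_set_def)
next
  case False
  let ?B = "unit_ball N"
  obtain a b where ab: "b > 0" "?B \<subseteq> {x. a \<bullet> x \<le> b}" "F = ?B \<inter> {x. a \<bullet> x = b}"
    using unit_ball_proper_face_hyperplane[OF N F False] .
  have "affine hull F \<subseteq> {x. a \<bullet> x = b}"
    by (rule hull_minimal) (use ab(3) affine_hyperplane in auto)
  then have outside: "N x > 1" if "x \<in> S" for x
    using S(1) that ab(3) by (force simp: unit_ball_def)
  have unit: "N v = 1" if "v \<in> F" for v
  proof (rule ccontr)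
    assume "N v \<noteq> 1"
    moreover have v: "N v \<le> 1" "a \<bullet> v = b" using that ab(3) by (auto simp: unit_ball_def)
    moreover have "N v > 0"
      using v(2) ab(1) is_norm_basic(3,5)[OF N(1), of v] by fastforce
    ultimately have lt: "0 < N v" "N v < 1" by auto
    define w where "w = (1 / N v) *\<^sub>R v"
    have "N w = 1" unfolding w_def is_norm_basic(4)[OF N(1)] using lt by simp
    then have "w \<in> ?B" by (simp add: unit_ball_def)
    then have "a \<bullet> w \<le> b" using ab(2) by auto
    moreover have "a \<bullet> w = b / N v" unfolding w_def using v(2) by simp
    moreover have "b / N v > b" using ab(1) lt by (simp add: field_simps)
    ultimately show False by simp
  qed
  show ?thesis unfolding is_Mset_def using outside unit S(2) by blast
qed

text \<open>The maximum in the definition of max_facets_proper_face is attained (the empty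
  face is always a proper face, and a polytope has only finitely many faces).\<close>
lemma max_facets_proper_face_attained:
  fixes N :: "'a::euclidean_space \<Rightarrow> real"
  assumes "is_norm N" "polytope (unit_ball N)"
  obtains F where "F face_of unit_ball N" "F \<noteq> unit_ball N"
    "max_facets_proper_face N = card {G. G facet_of F}"
proof -
  let ?B = "unit_ball N"
  define A where "A = {card {G. G facet_of F} | F. F face_of ?B \<and> F \<noteq> ?B}"
  have "A = (\<lambda>F. card {G. G facet_of F}) ` {F. F face_of ?B \<and> F \<noteq> ?B}" unfolding A_def by blast
  moreover have "finite {F. F face_of ?B \<and> F \<noteq> ?B}"
    using finite_polytope_faces[OF assms(2)] by (rule finite_subset[rotated]) auto
  ultimately have "finite A" by simp
  moreover have "0 \<in> ?B" by (simp add: unit_ball_def is_norm_basic(1)[OF assms(1)])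
  then have "card {G. G facet_of {}} \<in> A" unfolding A_def by (intro CollectI exI[of _ "{}"]) auto
  ultimately have "Max A \<in> A" using Max_in by blast
  then show ?thesis using that unfolding A_def max_facets_proper_face_def by auto
qed

lemma card_Mset_le_m_number:
  assumes "is_Mset N S"
  shows "enat (card S) \<le> m_number N"
proof (cases "\<exists>T. is_Mset N T \<and> infinite T")
  case False
  have "enat (card S) \<le> Sup {enat (card T) | T. is_Mset N T}"
    using assms by (intro Sup_upper) blast
  then show ?thesis unfolding m_number_def using False by simp
qed (simp add: m_number_def)

theorem mainTheorem17:
  fixes N :: "'a::euclidean_space \<Rightarrow> real"
  assumes "is_norm N"
    and "polytope (unit_ball N)"
  shows "enat (max_facets_proper_face N) \<le> m_number N"
proof -
  obtain F where F: "F face_of unit_ball N" "F \<noteq> unit_ball N"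
      and max: "max_facets_proper_face N = card {G. G facet_of F}"
    using max_facets_proper_face_attained[OF assms] .
  have "polytope F" using face_of_polytope_polytope[OF assms(2) F(1)] .
  then obtain S where card: "card S = card {G. G facet_of F}"
      and S: "S \<subseteq> affine hull F - F" "midpoint_set S \<subseteq> F"
    using polytope_facet_points by blast
  have "is_Mset N S" using Mset_from_proper_face[OF assms F S] .
  then show ?thesis using card_Mset_le_m_number[of N S] card max by simp
qed

end
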